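(* Let $n,k_1,k_2$ be nonnegative integers with $k_1+k_2\le n$ and $\ell=n-k_1-k_2$. If $G\in\mathcal{T}$, then there is a matrix $G'\in\mathcal{U}$ such that the $\mathbb{Z}_4$-codes with generator matrices $G$ and $G'$ are equivalent.
   Context: $\mathbb{Z}_4=\{0,1,2,3\}$ is the ring of integers modulo $4$; a $\mathbb{Z}_4$-code of length $n$ is a submodule of $\mathbb{Z}_4^n$, and two codes are equivalent if one is obtained from the other by permuting coordinates and changing the signs of some coordinates. Order $\mathbb{Z}_4$ by $0<1<2<3$ and order vectors lexicographically. Let $M_{m\times n}(R)$ denote the set of $m\times n$ matrices with entries in $R$. For $T\subset M_{m\times n}(\mathbb{Z}_4)$ let $P_{row}(T)$ be the set of matrices in $T$ whose rows $a_1,\dots,a_m$ satisfy $a_i\le a_j$ whenever $i\le j$. For $(0,1)$-matrices $A$ ($k_1\times k_2$), $D$ ($k_2\times\ell$) and a $\mathbb{Z}_4$-matrix $B$ ($k_1\times\ell$), let $G(A,B,D)=\begin{pmatrix} I_{k_1} & A & B\\ O & 2I_{k_2} & 2D\end{pmatrix}$. Let $\mathcal{S}=\{G(A,B,D)\mid A\in M_{k_1\times k_2}(\{0,1\}),\ B\in M_{k_1\times\ell}(\mathbb{Z}_4),\ D\in M_{k_2\times\ell}(\{0,1\})\}$, $\mathcal{T}=\{G(A,B,D)\in\mathcal{S}\mid A\in P_{row}(M_{k_1\times k_2}(\{0,1\}))\}$. Let $\mathcal{B}$ be the set consisting of all $k_1\times\ell$ matrices with entries in $\{0,2\}$ together with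 all $k_1\times\ell$ $\mathbb{Z}_4$-matrices $B$ such that, for the smallest $i\in\{1,\dots,k_1\}$ for which the $i$-th row of $B$ contains an entry not in $\{0,2\}$, the $i$-th row of $B$ has all entries in $\{0,1,2\}$. Let $\mathcal{U}=\{G(A,B,D)\in\mathcal{T}\mid B\in\mathcal{B}\}$. *)

theory Defs
  imports "HOL-Library.Numeral_Type" "Jordan_Normal_Form.Matrix"
begin

text \<open>Z4 is the library type 4 (integers mod 4); its order is 0 < 1 < 2 < 3.\<close>
type_synonym z4 = "4"

definition lex_le :: "z4 vec \<Rightarrow> z4 vec \<Rightarrow> bool" where
  "lex_le a b \<longleftrightarrow> a = b \<or>
     (\<exists>j < dim_vec a. (\<forall>i < j. a $ i = b $ i) \<and> a $ j < b $ j)"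

definition P_row :: "z4 mat set \<Rightarrow> z4 mat set" where
  "P_row T = {M \<in> T. \<forall>i j. i \<le> j \<and> j < dim_row M \<longrightarrow> lex_le (row M i) (row M j)}"

definition zero_one_mat :: "nat \<Rightarrow> nat \<Rightarrow> z4 mat set" where
  "zero_one_mat m n = {M \<in> carrier_mat m n. \<forall>i<m. \<forall>j<n. M $$ (i,j) \<in> {0,1}}"

text \<open>G(A,B,D) = [[I_k1, A, B],[O, 2 I_k2, 2 D]].\<close>
definition Gmat :: "nat \<Rightarrow> nat \<Rightarrow> nat \<Rightarrow> z4 mat \<Rightarrow> z4 mat \<Rightarrow> z4 mat \<Rightarrow> z4 mat" where
  "Gmat k1 k2 l A B D = mat (k1 + k2) (k1 + k2 + l) (\<lambda>(i,j).
     if i < k1 then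
       (if j < k1 then (if i = j then 1 else 0)
        else if j < k1 + k2 then A $$ (i, j - k1)
        else B $$ (i, j - k1 - k2))
     else
       (if j < k1 then 0
        else if j < k1 + k2 then (if i = j then 2 else 0)
        else 2 * D $$ (i - k1, j - k1 - k2)))"

definition S_set :: "nat \<Rightarrow> nat \<Rightarrow> nat \<Rightarrow> z4 mat set" where
  "S_set k1 k2 l = {Gmat k1 k2 l A B D | A B D.
     A \<in> zero_one_mat k1 k2 \<and> B \<in> carrier_mat k1 l \<and> D \<in> zero_one_mat k2 l}"

definition T_set :: "nat \<Rightarrow> nat \<Rightarrow> nat \<Rightarrow> z4 mat set" where
  "T_set k1 k2 l = {Gmat k1 k2 l A B D | A B D.
     A \<in> P_row (zero_one_mat k1 k2) \<and> B \<in> carrier_mat k1 l \<and> D \<in> zero_one_mat k2 l}"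

definition B_set :: "nat \<Rightarrow> nat \<Rightarrow> z4 mat set" where
  "B_set k1 l = {B \<in> carrier_mat k1 l.
     (\<forall>i<k1. \<forall>j<l. B $$ (i,j) \<in> {0,2}) \<or>
     (\<exists>i<k1. (\<forall>i'<i. \<forall>j<l. B $$ (i',j) \<in> {0,2}) \<and>
             (\<exists>j<l. B $$ (i,j) \<notin> {0,2}) \<and>
             (\<forall>j<l. B $$ (i,j) \<in> {0,1,2}))}"

definition U_set :: "nat \<Rightarrow> nat \<Rightarrow> nat \<Rightarrow> z4 mat set" where
  "U_set k1 k2 l = {Gmat k1 k2 l A B D | A B D.
     A \<in> P_row (zero_one_mat k1 k2) \<and> B \<in> B_set k1 l \<and> D \<in> zero_one_mat k2 l}"

definition code :: "z4 mat \<Rightarrow> z4 vec set" where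
  "code G = {transpose_mat G *\<^sub>v c | c. c \<in> carrier_vec (dim_row G)}"

definition codes_equiv :: "nat \<Rightarrow> z4 vec set \<Rightarrow> z4 vec set \<Rightarrow> bool" where
  "codes_equiv n C1 C2 \<longleftrightarrow>
     (\<exists>\<sigma> s. \<sigma> permutes {..<n} \<and> (\<forall>i<n. s i \<in> {1, -1}) \<and>
        C2 = (\<lambda>v. vec n (\<lambda>i. s i * v $ \<sigma> i)) ` C1)"

end

theory Submission imports Defs begin

text \<open>Negating a coordinate of a \<open>\<int>\<^sub>4\<close>-code is an equivalence; applied to a column
  of \<open>B\<close> it amounts to negating that column of the generator matrix \<open>G(A,B,D)\<close>, since
  \<open>-2 = 2\<close> leaves the \<open>2D\<close> block unchanged. Such negations also preserve
  membership of an entry in \<open>{0,2}\<close>. So take the first row of \<open>B\<close> with an odd entry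
  and negate every column in which that row has a \<open>3\<close>: the rows above stay in
  \<open>{0,2}\<close>, and the chosen row then has all entries in \<open>{0,1,2}\<close>.\<close>

lemma z4_cases: "(x::4) = 0 \<or> x = 1 \<or> x = 2 \<or> x = 3"
proof (cases x)
  case (of_int z)
  then have "z = 0 \<or> z = 1 \<or> z = 2 \<or> z = 3" by auto
  then show ?thesis using of_int by auto
qed

lemma z4_neg_double: "- (2 * x) = 2 * (x::4)"
  using z4_cases[of x] by auto

lemma z4_neg_in_even: "- x \<in> {0, 2} \<longleftrightarrow> (x::4) \<in> {0, 2}"
  using z4_cases[of x] by auto

lemma code_scale_columns:
  fixes M :: "4 mat"
  assumes M: "M \<in> carrier_mat m n"
  shows "code (mat m n (\<lambda>(r,c). s c * M $$ (r,c))) = (\<lambda>v. vec n (\<lambda>i. s i * v $ i)) ` code M"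
proof -
  let ?M' = "mat m n (\<lambda>(r,c). s c * M $$ (r,c))"
  have combination: "transpose_mat ?M' *\<^sub>v c = vec n (\<lambda>i. s i * (transpose_mat M *\<^sub>v c) $ i)"
    if c: "c \<in> carrier_vec m" for c
  proof (rule eq_vecI)
    fix i assume "i < dim_vec (vec n (\<lambda>i. s i * (transpose_mat M *\<^sub>v c) $ i))"
    then have i: "i < n" by simp
    have "(transpose_mat ?M' *\<^sub>v c) $ i = (\<Sum>r<m. (s i * M $$ (r,i)) * c $ r)"
      using i c M by (simp add: scalar_prod_def atLeast0LessThan)
    also have "\<dots> = s i * (\<Sum>r<m. M $$ (r,i) * c $ r)"
      by (simp add: sum_distrib_left mult.assoc)
    also have "\<dots> = s i * (transpose_mat M *\<^sub>v c) $ i"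
      using i c M by (simp add: scalar_prod_def atLeast0LessThan)
    finally show "(transpose_mat ?M' *\<^sub>v c) $ i = vec n (\<lambda>i. s i * (transpose_mat M *\<^sub>v c) $ i) $ i"
      using i by simp
  qed simp
  show ?thesis
    unfolding code_def Setcompr_eq_image image_image using M
    by (simp add: combination cong: image_cong)
qed

lemma codes_equiv_scale_columns:
  fixes M :: "4 mat"
  assumes "M \<in> carrier_mat m n" and "\<And>i. i < n \<Longrightarrow> s i \<in> {1, -1}"
  shows "codes_equiv n (code M) (code (mat m n (\<lambda>(r,c). s c * M $$ (r,c))))"
  unfolding codes_equiv_def code_scale_columns[OF assms(1)]
  by (intro exI[of _ id] exI[of _ s]) (use assms(2) in \<open>auto simp: permutes_id\<close>)

lemma Gmat_scale_B_columns:
  assumes t: "\<And>j. t j \<in> {1, -1}"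
  shows "Gmat k1 k2 l A (mat k1 l (\<lambda>(i,j). t j * B $$ (i,j))) D =
    mat (k1+k2) (k1+k2+l) (\<lambda>(r,c). (if c < k1+k2 then 1 else t (c-k1-k2)) * Gmat k1 k2 l A B D $$ (r,c))"
    (is "?lhs = ?rhs")
proof (rule eq_matI)
  fix i j assume "i < dim_row ?rhs" and "j < dim_col ?rhs"
  moreover have "t (j-k1-k2) = 1 \<or> t (j-k1-k2) = -1"
    using t[of "j-k1-k2"] by auto
  ultimately show "?lhs $$ (i, j) = ?rhs $$ (i, j)"
    by (auto simp: Gmat_def z4_neg_double)
qed (auto simp: Gmat_def)

lemma column_signs_into_B_set:
  fixes B :: "4 mat"
  obtains t where "\<And>j. t j \<in> {1, -1}" and "mat k1 l (\<lambda>(i,j). t j * B $$ (i,j)) \<in> B_set k1 l"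
proof -
  define odd_row where "odd_row i \<longleftrightarrow> i < k1 \<and> (\<exists>j<l. B $$ (i,j) \<notin> {0,2})" for i
  define i0 where "i0 = (LEAST i. odd_row i)"
  define t :: "nat \<Rightarrow> 4" where "t j = (if B $$ (i0,j) = 3 then -1 else 1)" for j
  define B' where "B' = mat k1 l (\<lambda>(i,j). t j * B $$ (i,j))"
  have t: "t j \<in> {1, -1}" for j
    unfolding t_def by auto
  have B'_even: "B' $$ (i,j) \<in> {0,2} \<longleftrightarrow> B $$ (i,j) \<in> {0,2}" if "i < k1" "j < l" for i j
    using that t[of j] z4_neg_in_even[of "B $$ (i,j)"] unfolding B'_def by auto
  have "B' \<in> B_set k1 l"
  proof (cases "\<exists>i. odd_row i")
    case False
    then have "\<forall>i<k1. \<forall>j<l. B' $$ (i,j) \<in> {0,2}"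
      using B'_even unfolding odd_row_def by blast
    then show ?thesis
      unfolding B_set_def B'_def by simp
  next
    case True
    then have "odd_row i0"
      unfolding i0_def by (rule LeastI_ex)
    then have i0: "i0 < k1" and "\<exists>j<l. B' $$ (i0,j) \<notin> {0,2}"
      using B'_even unfolding odd_row_def by auto
    moreover have "\<forall>i<i0. \<forall>j<l. B' $$ (i,j) \<in> {0,2}"
    proof (intro allI impI)
      fix i j assume "i < i0" "j < l"
      have "\<not> odd_row i"
        using \<open>i < i0\<close> unfolding i0_def by (rule not_less_Least)
      then show "B' $$ (i,j) \<in> {0,2}"
        using B'_even \<open>i < i0\<close> \<open>j < l\<close> i0 unfolding odd_row_def by auto
    qed
    moreover have "\<forall>j<l. B' $$ (i0,j) \<in> {0,1,2}"
    proof (intro allI impI)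
      fix j assume "j < l"
      then show "B' $$ (i0,j) \<in> {0,1,2}"
        using i0 z4_cases[of "B $$ (i0,j)"] unfolding B'_def t_def by auto
    qed
    moreover have "B' \<in> carrier_mat k1 l"
      unfolding B'_def by simp
    ultimately show ?thesis
      unfolding B_set_def by blast
  qed
  then show thesis
    using that t unfolding B'_def by blast
qed

theorem mainTheorem10:
  fixes n k1 k2 :: nat and G :: "4 mat"
  assumes "k1 + k2 \<le> n"
    and "G \<in> T_set k1 k2 (n - k1 - k2)"
  shows "\<exists>G' \<in> U_set k1 k2 (n - k1 - k2). codes_equiv n (code G) (code G')"
proof -
  define l where "l = n - k1 - k2"
  have n: "n = k1 + k2 + l"
    using assms(1) unfolding l_def by simp
  obtain A B D where G: "G = Gmat k1 k2 l A B D" and "A \<in> P_row (zero_one_mat k1 k2)"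
    and "D \<in> zero_one_mat k2 l"
    using assms(2) unfolding T_set_def l_def by auto
  obtain t where t: "\<And>j. t j \<in> {1, -1}" and B': "mat k1 l (\<lambda>(i,j). t j * B $$ (i,j)) \<in> B_set k1 l"
    using column_signs_into_B_set[of k1 l B] by blast
  define G' where "G' = Gmat k1 k2 l A (mat k1 l (\<lambda>(i,j). t j * B $$ (i,j))) D"
  have "G' \<in> U_set k1 k2 l"
    unfolding U_set_def G'_def using \<open>A \<in> _\<close> \<open>D \<in> _\<close> B' by blast
  moreover have "codes_equiv n (code G) (code G')"
    unfolding G'_def Gmat_scale_B_columns[OF t] G n
    by (rule codes_equiv_scale_columns) (use t in \<open>auto simp: Gmat_def\<close>)
  ultimately show ?thesis
    unfolding l_def by blast
qed

end
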